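(* Let the exposure be binary, $\mathscr{X}=\{0,1\}$. For each $x\in\mathscr{X}$ let $\mathbf{M}(x)\in\mathbb{R}^p$ be the potential mediator vector, assumed mean-zero multivariate Gaussian with covariance matrix $\boldsymbol{\Sigma}(x)$, and let $\mathcal{G}(x)$ be the corresponding Gaussian covariance graph on vertices $\{1,\dots,p\}$ (an edge $(j,k)$, $j\neq k$, is absent iff $\sigma_{jk}(x)=0$), so that graphs and covariance matrices are in one-to-one correspondence. For a graph $\boldsymbol{\mathcal{G}}$ with covariance matrix $\boldsymbol{\Sigma}$, let $Y(x,\boldsymbol{\mathcal{G}})\in\mathbb{R}$ be the potential outcome under exposure $x$ and mediator graph $\boldsymbol{\mathcal{G}}$. Let $X$ be the actual exposure and $\mathbf{W}\in\mathbb{R}^q$ observed confounders. Assume: (A1) the stable unit treatment value assumption (SUTVA); (A2) $\mathbb{P}(X=x)>0$ for all $x\in\mathscr{X}$; (A3) $\{Y(1,\boldsymbol{\mathcal{G}}),Y(0,\boldsymbol{\mathcal{G}}),\mathbf{M}(1),\mathbf{M}(0)\}$ is independent of $X$ given $\mathbf{W}$, for every graph $\boldsymbol{\mathcal{G}}$; (A4) $Y(x,\boldsymbol{\mathcal{G}})$ is independent of $\mathbf{M}(x)$ given $X=x,\mathbf{W}$, for every $x$ and every graph $\boldsymbol{\mathcal{G}}$; (A5) there is $\boldsymbol{\theta}\in\mathbb{R}^p$ with $\|\boldsymbol{\theta}\|_2=1$ and coefficients $\alpha_0,\alpha\in\mathbb{R}$, $\boldsymbol{\phi}_1\in\mathbb{R}^q$,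 $\gamma_0,\gamma,\beta\in\mathbb{R}$, $\boldsymbol{\phi}_2\in\mathbb{R}^q$ such that $\log(\boldsymbol{\theta}^\top\boldsymbol{\Sigma}(x)\boldsymbol{\theta})=\alpha_0+\alpha x+\mathbf{W}^\top\boldsymbol{\phi}_1+\eta$ and $Y(x,\boldsymbol{\mathcal{G}})=\gamma_0+\gamma x+\beta\log(\boldsymbol{\theta}^\top\boldsymbol{\Sigma}\boldsymbol{\theta})+\mathbf{W}^\top\boldsymbol{\phi}_2+\epsilon$ (with $\boldsymbol{\Sigma}$ the covariance matrix corresponding to $\boldsymbol{\mathcal{G}}$), where $\eta,\epsilon$ are independent mean-zero errors. Then $\tau_{\mathrm{ATE}}:=\mathbb{E}\{Y(1,\mathcal{G}(1))-Y(0,\mathcal{G}(0))\}=\gamma+\alpha\beta$; $\tau_{\mathrm{AIE}}(x):=\mathbb{E}\{Y(x,\mathcal{G}(1))-Y(x,\mathcal{G}(0))\}=\alpha\beta$ for $x=0,1$; $\tau_{\mathrm{ADE}}(x):=\mathbb{E}\{Y(1,\mathcal{G}(x))-Y(0,\mathcal{G}(x))\}=\gamma$ for $x=0,1$.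
   Context: A Gaussian covariance graph model identifies a graph on $p$ vertices with the covariance matrix of a mean-zero Gaussian vector, where a missing edge between two vertices corresponds to zero covariance (marginal independence) between the corresponding variables. $\mathcal{G}(x)$ denotes the potential mediator graph under exposure $x$, and $Y(x,\mathcal{G}(x'))$ the potential outcome under exposure $x$ with the mediator graph set to its value under exposure $x'$. *)

theory Defs
  imports "HOL-Probability.Probability" "HOL-Analysis.Analysis"
begin

definition sigma_of :: "'a measure \<Rightarrow> ('a \<Rightarrow> 'b) \<Rightarrow> 'b measure \<Rightarrow> 'a measure" where
  "sigma_of M Z N = vimage_algebra (space M) Z N"

text \<open>Conditional independence of U and V given Z, holding on the event E
  (E = space M: ordinary conditional independence; E = {X = x}: "given X = x, W"
  when Z = (X, W)).\<close>
definition cond_indep_on ::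
  "'a measure \<Rightarrow> 'a set \<Rightarrow> ('a \<Rightarrow> 'b) \<Rightarrow> 'b measure \<Rightarrow> ('a \<Rightarrow> 'c) \<Rightarrow> 'c measure
     \<Rightarrow> ('a \<Rightarrow> 'd) \<Rightarrow> 'd measure \<Rightarrow> bool" where
  "cond_indep_on M E U MU V MV Z MZ \<longleftrightarrow>
    (\<forall>A\<in>sets MU. \<forall>B\<in>sets MV. AE \<omega> in M. \<omega> \<in> E \<longrightarrow>
       real_cond_exp M (sigma_of M Z MZ) (\<lambda>\<omega>. indicator A (U \<omega>) * indicator B (V \<omega>)) \<omega> =
       real_cond_exp M (sigma_of M Z MZ) (\<lambda>\<omega>. indicator A (U \<omega>)) \<omega> *
       real_cond_exp M (sigma_of M Z MZ) (\<lambda>\<omega>. indicator B (V \<omega>)) \<omega>)"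

text \<open>Given the (random) covariance matrix S, the random vector Mv is mean-zero
  multivariate Gaussian with covariance S: its conditional characteristic function
  is E[exp(i v.Mv) | S] = exp(- v' S v / 2) for all v.\<close>
definition cond_centered_gaussian ::
  "'a measure \<Rightarrow> ('a \<Rightarrow> real^'p) \<Rightarrow> ('a \<Rightarrow> real^'p^'p) \<Rightarrow> bool" where
  "cond_centered_gaussian M Mv S \<longleftrightarrow>
    (\<forall>v. (AE \<omega> in M. real_cond_exp M (sigma_of M S borel) (\<lambda>\<omega>. cos (v \<bullet> Mv \<omega>)) \<omega>
                        = exp (- (v \<bullet> (S \<omega> *v v)) / 2))
       \<and> (AE \<omega> in M. real_cond_exp M (sigma_of M S borel) (\<lambda>\<omega>. sin (v \<bullet> Mv \<omega>)) \<omega> = 0))"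

definition pos_def_mat :: "real^'p^'p \<Rightarrow> bool" where
  "pos_def_mat S \<longleftrightarrow> transpose S = S \<and> (\<forall>v. v \<noteq> 0 \<longrightarrow> v \<bullet> (S *v v) > 0)"

text \<open>Gaussian covariance graph of a covariance matrix (edge (j,k), j \<noteq> k, iff sigma_jk \<noteq> 0).
  Graphs are identified with their covariance matrices, as in the paper.\<close>
definition cov_graph :: "real^'p^'p \<Rightarrow> ('p \<times> 'p) set" where
  "cov_graph S = {(j, k). j \<noteq> k \<and> S $ j $ k \<noteq> 0}"

end

theory Submission
  imports Defs
begin

text \<open>Both structural equations are linear, so substituting the mediator model into the
  outcome model writes every cross-world outcome \<open>Y(x, \<G>(x'))\<close> as
  \<open>\<gamma>0 + \<gamma> x + \<beta> (\<alpha>0 + \<alpha> x')\<close> plus a confounder term that does not depend on the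
  exposures plus the mean-zero errors \<open>\<beta> \<eta>(x') + \<epsilon>(x)\<close>.  In a contrast of two such outcomes
  the confounder terms cancel and the errors integrate to zero, leaving
  \<open>\<gamma> (x - z) + \<alpha> \<beta> (x' - z')\<close>.  The identification assumptions (A2)--(A4), Gaussianity and the
  independence of the errors are needed only to estimate these effects from observed data,
  not for their values under the model.\<close>

lemma integral_eq_const_plus_centered:
  fixes f u :: "'a \<Rightarrow> real"
  assumes "prob_space M" and "integrable M u" and "integral\<^sup>L M u = 0"
    and "\<And>\<omega>. \<omega> \<in> space M \<Longrightarrow> f \<omega> = c + u \<omega>"
  shows "integral\<^sup>L M f = c"
proof -
  interpret prob_space M by (rule assms(1))
  have "integral\<^sup>L M f = (\<integral>\<omega>. c + u \<omega> \<partial>M)"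
    using assms(4) by (rule Bochner_Integration.integral_cong[OF refl])
  also have "\<dots> = c"
    using assms(2,3) by (simp add: prob_space)
  finally show ?thesis .
qed

lemma contrast_linear_mediation_model:
  fixes m :: "real \<Rightarrow> 'a \<Rightarrow> real" and y :: "real \<Rightarrow> real \<Rightarrow> 'a \<Rightarrow> real"
  assumes M: "prob_space M"
    and mediator: "\<And>x \<omega>. x \<in> E \<Longrightarrow> \<omega> \<in> space M \<Longrightarrow> m x \<omega> = \<alpha>0 + \<alpha> * x + V \<omega> + \<eta> x \<omega>"
    and outcome: "\<And>x x' \<omega>. x \<in> E \<Longrightarrow> x' \<in> E \<Longrightarrow> \<omega> \<in> space M \<Longrightarrow>
        y x x' \<omega> = \<gamma>0 + \<gamma> * x + \<beta> * m x' \<omega> + U \<omega> + \<epsilon> x \<omega>"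
    and \<eta>_centered: "\<And>x. x \<in> E \<Longrightarrow> integrable M (\<eta> x) \<and> integral\<^sup>L M (\<eta> x) = 0"
    and \<epsilon>_centered: "\<And>x. x \<in> E \<Longrightarrow> integrable M (\<epsilon> x) \<and> integral\<^sup>L M (\<epsilon> x) = 0"
    and levels: "x \<in> E" "x' \<in> E" "z \<in> E" "z' \<in> E"
  shows "(\<integral>\<omega>. y x x' \<omega> - y z z' \<omega> \<partial>M) = \<gamma> * (x - z) + \<alpha> * \<beta> * (x' - z')"
proof (rule integral_eq_const_plus_centered[OF M])
  let ?u = "\<lambda>\<omega>. \<beta> * (\<eta> x' \<omega> - \<eta> z' \<omega>) + (\<epsilon> x \<omega> - \<epsilon> z \<omega>)"
  have int: "integrable M (\<eta> x')" "integrable M (\<eta> z')" "integrable M (\<epsilon> x)" "integrable M (\<epsilon> z)"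
    and mean0: "integral\<^sup>L M (\<eta> x') = 0" "integral\<^sup>L M (\<eta> z') = 0"
      "integral\<^sup>L M (\<epsilon> x) = 0" "integral\<^sup>L M (\<epsilon> z) = 0"
    using \<eta>_centered \<epsilon>_centered levels by blast+
  show "integrable M ?u"
    using int by simp
  show "integral\<^sup>L M ?u = 0"
    using int mean0 by simp
  show "y x x' \<omega> - y z z' \<omega> = \<gamma> * (x - z) + \<alpha> * \<beta> * (x' - z') + ?u \<omega>"
    if "\<omega> \<in> space M" for \<omega>
    using that levels by (simp add: outcome mediator algebra_simps)
qed

theorem theorem1:
  fixes M :: "'a measure"
    and X :: "'a \<Rightarrow> real" and W :: "'a \<Rightarrow> real^'q"
    and Med :: "real \<Rightarrow> 'a \<Rightarrow> real^'p" and Sig :: "real \<Rightarrow> 'a \<Rightarrow> real^'p^'p"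
    and Y :: "real \<Rightarrow> real^'p^'p \<Rightarrow> 'a \<Rightarrow> real"
    and \<theta> :: "real^'p" and \<alpha>0 \<alpha> \<gamma>0 \<gamma> \<beta> :: real and \<phi>1 \<phi>2 :: "real^'q"
    and \<eta> \<epsilon> :: "real \<Rightarrow> 'a \<Rightarrow> real"
  assumes M: "prob_space M"
    and X_meas: "X \<in> borel_measurable M" and X_bin: "\<forall>\<omega>\<in>space M. X \<omega> \<in> {0, 1}"
    and W_meas: "W \<in> borel_measurable M"
    and Med_meas: "\<forall>x\<in>{0, 1}. Med x \<in> borel_measurable M"
    and Sig_meas: "\<forall>x\<in>{0, 1}. Sig x \<in> borel_measurable M"
    and Sig_pd: "\<forall>x\<in>{0, 1}. \<forall>\<omega>\<in>space M. pos_def_mat (Sig x \<omega>)"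
    and Y_meas: "\<forall>x\<in>{0, 1}. \<forall>S. pos_def_mat S \<longrightarrow> Y x S \<in> borel_measurable M"
    and gauss: "\<forall>x\<in>{0, 1}. cond_centered_gaussian M (Med x) (Sig x)"
    and A2: "\<forall>x\<in>{0, 1}. measure M {\<omega> \<in> space M. X \<omega> = x} > 0"
    and A3: "\<forall>S. pos_def_mat S \<longrightarrow>
               cond_indep_on M (space M)
                 (\<lambda>\<omega>. (Y 1 S \<omega>, Y 0 S \<omega>, Med 1 \<omega>, Med 0 \<omega>)) borel X borel W borel"
    and A4: "\<forall>x\<in>{0, 1}. \<forall>S. pos_def_mat S \<longrightarrow>
               cond_indep_on M {\<omega> \<in> space M. X \<omega> = x}
                 (Y x S) borel (Med x) borel (\<lambda>\<omega>. (X \<omega>, W \<omega>)) borel"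
    and \<theta>_norm: "norm \<theta> = 1"
    and med_model: "\<forall>x\<in>{0, 1}. \<forall>\<omega>\<in>space M.
               ln (\<theta> \<bullet> (Sig x \<omega> *v \<theta>)) = \<alpha>0 + \<alpha> * x + W \<omega> \<bullet> \<phi>1 + \<eta> x \<omega>"
    and out_model: "\<forall>x\<in>{0, 1}. \<forall>S. pos_def_mat S \<longrightarrow> (\<forall>\<omega>\<in>space M.
               Y x S \<omega> = \<gamma>0 + \<gamma> * x + \<beta> * ln (\<theta> \<bullet> (S *v \<theta>)) + W \<omega> \<bullet> \<phi>2 + \<epsilon> x \<omega>)"
    and \<eta>_mean0: "\<forall>x\<in>{0, 1}. integrable M (\<eta> x) \<and> integral\<^sup>L M (\<eta> x) = 0"
    and \<epsilon>_mean0: "\<forall>x\<in>{0, 1}. integrable M (\<epsilon> x) \<and> integral\<^sup>L M (\<epsilon> x) = 0"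
    and err_indep: "\<forall>x\<in>{0, 1}. \<forall>x'\<in>{0, 1}. prob_space.indep_var M borel (\<eta> x) borel (\<epsilon> x')"
  shows "(\<integral>\<omega>. Y 1 (Sig 1 \<omega>) \<omega> - Y 0 (Sig 0 \<omega>) \<omega> \<partial>M) = \<gamma> + \<alpha> * \<beta>
     \<and> (\<forall>x\<in>{0, 1}. (\<integral>\<omega>. Y x (Sig 1 \<omega>) \<omega> - Y x (Sig 0 \<omega>) \<omega> \<partial>M) = \<alpha> * \<beta>)
     \<and> (\<forall>x\<in>{0, 1}. (\<integral>\<omega>. Y 1 (Sig x \<omega>) \<omega> - Y 0 (Sig x \<omega>) \<omega> \<partial>M) = \<gamma>)"
proof -
  have contrast: "(\<integral>\<omega>. Y x (Sig x' \<omega>) \<omega> - Y z (Sig z' \<omega>) \<omega> \<partial>M)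
      = \<gamma> * (x - z) + \<alpha> * \<beta> * (x' - z')"
    if "x \<in> {0, 1}" "x' \<in> {0, 1}" "z \<in> {0, 1}" "z' \<in> {0, 1}" for x x' z z'
  proof (rule contrast_linear_mediation_model[OF M, where y = "\<lambda>x x' \<omega>. Y x (Sig x' \<omega>) \<omega>"
        and m = "\<lambda>x \<omega>. ln (\<theta> \<bullet> (Sig x \<omega> *v \<theta>))" and V = "\<lambda>\<omega>. W \<omega> \<bullet> \<phi>1"
        and U = "\<lambda>\<omega>. W \<omega> \<bullet> \<phi>2"])
    show "Y x (Sig x' \<omega>) \<omega> = \<gamma>0 + \<gamma> * x + \<beta> * ln (\<theta> \<bullet> (Sig x' \<omega> *v \<theta>)) + W \<omega> \<bullet> \<phi>2 + \<epsilon> x \<omega>"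
      if "x \<in> {0, 1}" "x' \<in> {0, 1}" "\<omega> \<in> space M" for x x' \<omega>
      using out_model Sig_pd that by blast
  qed (use that med_model \<eta>_mean0 \<epsilon>_mean0 in auto)
  show ?thesis
    using contrast[of 1 1 0 0] contrast[of _ 1 _ 0] contrast[of 1 _ 0] by auto
qed

end
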